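(* Under the policy $\pi=\texttt{EBHD-ETC}$, the event $$\mathcal H_T=\Big\{\forall \rho\le \tfrac TK,\ \forall G\in\mathcal G:\ |U(G;\tilde\mu^\rho)-U(G;\mu)|\le 2M\epsilon^\rho\Big\}$$ satisfies $\Pr(\mathcal H_T)\ge 1-\frac1T$.
   Context: Model: $M$ agents $\mathcal M$, $K>M$ arms $\mathcal K$; pair $(m,k)$ has a Bernoulli distribution of mean $\mu_{m,k}\in[0,1]$. Each round every agent pulls an arm; agent $m$ receives an independent Bernoulli sample of its arm if no other agent pulls the same arm, else $0$. A matching $G$ assigns an arm $k^G_m$ to each agent; $\mathcal G$ is the set of these; $U(G;w)=\sum_m w_{m,k^G_m}\mathbb 1\{\forall m'\ne m:k^G_{m'}\ne k^G_m\}$; $G^*=\arg\max U(G;\mu)$ unique. Each agent may query one arm per round as a hint, observing an independent sample. Covering matchings $R_i$ ($i\le K$) match agent $m$ to arm $((m+i-2)\bmod K)+1$. $\texttt{Hungarian}(w)$ returns an assignment of agents to distinct arms maximizing $\sum_m w_{m,k^G_m}$ (common tie-breaking). Decentralized algorithm $\texttt{EBHD-ETC}$ over horizon $T$: after a rank-assignment phase, epochs $\rho=0,1,\dots$; at the start of epoch $\rho$ all agents share a matrix $\tilde\mu^\rho$ ($\tilde\mu^0=0$). In epoch $\rho$: $G^\rho=\texttt{Hungarian}(\tilde\mu^\rho)$; for $K$ consecutive rounds $t$ each agent $m$ pulls its arm in $G^\rho$ and queries a hint on its arm in $R_{(t\bmod K)+1}$, updating its own empirical means $\hat\mu_{m,k}$;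 then a collision-based communication phase of $O(M^2K)$ rounds after which all agents hold the same $\tilde\mu^{\rho+1}$ with $\hat\mu^{\rho+1}_{m,k}\le\tilde\mu^{\rho+1}_{m,k}\le\hat\mu^{\rho+1}_{m,k}+\sqrt{1/(\rho+1)}$. With $\eta=\sqrt{2/(MT^2)}$ and $\epsilon^\rho=\sqrt{\log(2/\eta)/\rho}$, an active edge set $\mathcal C^\rho$ ($\mathcal C^0=\mathcal M\times\mathcal K$) is updated after each epoch: for $(m,k)\in\mathcal C^\rho$, $G^\rho_{(m,k)}=\{(m,k)\}\cup\texttt{Hungarian}(\tilde\mu^\rho_{-m,-k})$ (row $m$, column $k$ removed), and $(m,k)\in\mathcal C^{\rho+1}$ iff $U(G^\rho;\tilde\mu^\rho)-U(G^\rho_{(m,k)};\tilde\mu^\rho)\le 4M\epsilon^\rho$. Epochs continue while $|\mathcal C^\rho|>M$; afterwards agents commit to $\texttt{Hungarian}(\tilde\mu^\rho)$ with no hints or communication. *)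

theory Defs
  imports "HOL-Probability.Probability"
begin

(* Conventions: agents are 0..<M, arms are 0..<K (0-based versions of 1..M, 1..K).
   A weight matrix is a function  w :: nat => nat => real  (w m k for agent m, arm k). *)

definition matchings :: "nat \<Rightarrow> nat \<Rightarrow> (nat \<Rightarrow> nat) set" where
  "matchings M K = {g. \<forall>m<M. g m < K}"

definition U :: "nat \<Rightarrow> (nat \<Rightarrow> nat) \<Rightarrow> (nat \<Rightarrow> nat \<Rightarrow> real) \<Rightarrow> real" where
  "U M g w = (\<Sum>m<M. if (\<forall>m'<M. m' \<noteq> m \<longrightarrow> g m' \<noteq> g m) then w m (g m) else 0)"

(* covering matching R_i (i = 1..K, 1-based as in the paper), rendered 0-based:
   agent m (0-based) is matched to arm (m + i - 1) mod K (0-based) *)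
definition covering :: "nat \<Rightarrow> nat \<Rightarrow> nat \<Rightarrow> nat" where
  "covering K i m = (m + i - 1) mod K"

definition is_hungarian ::
  "((nat \<Rightarrow> nat \<Rightarrow> real) \<Rightarrow> nat set \<Rightarrow> nat set \<Rightarrow> (nat \<Rightarrow> nat)) \<Rightarrow> bool" where
  "is_hungarian hung \<longleftrightarrow>
     (\<forall>w A B. finite A \<and> finite B \<and> card A \<le> card B \<longrightarrow>
        (hung w A B) ` A \<subseteq> B \<and> inj_on (hung w A B) A \<and>
        (\<forall>g. g ` A \<subseteq> B \<and> inj_on g A \<longrightarrow>
              (\<Sum>m\<in>A. w m (g m)) \<le> (\<Sum>m\<in>A. w m (hung w A B m))))"

(* Specification of the communication phase: comm r h is the common matrix
   \<tilde>\<mu>^r obtained from the empirical means h = \<hat>\<mu>^r (r >= 1), with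
   h <= comm r h <= h + sqrt(1/r). *)
definition is_comm :: "nat \<Rightarrow> nat \<Rightarrow> (nat \<Rightarrow> (nat \<Rightarrow> nat \<Rightarrow> real) \<Rightarrow> (nat \<Rightarrow> nat \<Rightarrow> real)) \<Rightarrow> bool" where
  "is_comm M K comm \<longleftrightarrow>
     (\<forall>r h. 1 \<le> r \<and> (\<forall>m<M. \<forall>k<K. 0 \<le> h m k \<and> h m k \<le> 1) \<longrightarrow>
        (\<forall>m<M. \<forall>k<K. h m k \<le> comm r h m k \<and> comm r h m k \<le> h m k + sqrt (1 / real r)))"

(* Randomness: omega (rho, j, m, k, b) is an independent Bernoulli(mu m k) sample used in
   round j (< K) of the exploration part of epoch rho, by agent m on arm k;
   b = True: hint sample, b = False: pull sample. *)
type_synonym sample = "nat \<times> nat \<times> nat \<times> nat \<times> bool \<Rightarrow> bool"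

(* statistics (sum of observed samples, number of observed samples) after rho epochs *)
type_synonym stats = "(nat \<Rightarrow> nat \<Rightarrow> real) \<times> (nat \<Rightarrow> nat \<Rightarrow> nat)"

definition emp_mean :: "stats \<Rightarrow> nat \<Rightarrow> nat \<Rightarrow> real" where
  "emp_mean st m k = fst st m k / real (snd st m k)"

definition tilde_of :: "(nat \<Rightarrow> (nat \<Rightarrow> nat \<Rightarrow> real) \<Rightarrow> (nat \<Rightarrow> nat \<Rightarrow> real))
    \<Rightarrow> nat \<Rightarrow> stats \<Rightarrow> (nat \<Rightarrow> nat \<Rightarrow> real)" where
  "tilde_of comm rho st = (if rho = 0 then (\<lambda>m k. 0) else comm rho (emp_mean st))"

(* one exploration epoch: agents pull according to G (collision gives no sample),
   and in round j of the epoch (global round start + j) agent m queries a hint on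
   its arm in the covering matching R_{((start + j) mod K) + 1} *)
definition epoch_update :: "nat \<Rightarrow> nat \<Rightarrow> sample \<Rightarrow> nat \<Rightarrow> nat \<Rightarrow> (nat \<Rightarrow> nat) \<Rightarrow> stats \<Rightarrow> stats" where
  "epoch_update M K \<omega> rho start G st =
     (let nocoll = (\<lambda>m. \<forall>m'<M. m' \<noteq> m \<longrightarrow> G m' \<noteq> G m);
          hint = (\<lambda>j m. covering K (((start + j) mod K) + 1) m);
          cnt = (\<lambda>m k. card {j. j < K \<and> nocoll m \<and> G m = k}
                      + card {j. j < K \<and> hint j m = k});
          sm = (\<lambda>m k. real (card {j. j < K \<and> nocoll m \<and> G m = k \<and> \<omega> (rho, j, m, k, False)})
                     + real (card {j. j < K \<and> hint j m = k \<and> \<omega> (rho, j, m, k, True)}))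
      in (\<lambda>m k. fst st m k + sm m k, \<lambda>m k. snd st m k + cnt m k))"

fun run :: "nat \<Rightarrow> nat \<Rightarrow> ((nat \<Rightarrow> nat \<Rightarrow> real) \<Rightarrow> nat set \<Rightarrow> nat set \<Rightarrow> (nat \<Rightarrow> nat))
    \<Rightarrow> (nat \<Rightarrow> (nat \<Rightarrow> nat \<Rightarrow> real) \<Rightarrow> (nat \<Rightarrow> nat \<Rightarrow> real)) \<Rightarrow> (nat \<Rightarrow> nat)
    \<Rightarrow> sample \<Rightarrow> nat \<Rightarrow> stats" where
  "run M K hung comm start \<omega> 0 = ((\<lambda>m k. 0), (\<lambda>m k. 0))"
| "run M K hung comm start \<omega> (Suc rho) =
     (let st = run M K hung comm start \<omega> rho;
          G = hung (tilde_of comm rho st) {..<M} {..<K}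
      in epoch_update M K \<omega> rho (start rho) G st)"

definition mu_tilde where
  "mu_tilde M K hung comm start \<omega> rho =
     tilde_of comm rho (run M K hung comm start \<omega> rho)"

definition eta :: "nat \<Rightarrow> nat \<Rightarrow> real" where
  "eta M T = sqrt (2 / (real M * (real T)^2))"

(* \<epsilon>^rho = sqrt(log(2/eta)/rho), meaningful for rho >= 1 (\<epsilon>^0 = +infinity) *)
definition eps :: "nat \<Rightarrow> nat \<Rightarrow> nat \<Rightarrow> real" where
  "eps M T rho = sqrt (ln (2 / eta M T) / real rho)"

fun active :: "nat \<Rightarrow> nat \<Rightarrow> nat \<Rightarrow> ((nat \<Rightarrow> nat \<Rightarrow> real) \<Rightarrow> nat set \<Rightarrow> nat set \<Rightarrow> (nat \<Rightarrow> nat))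
    \<Rightarrow> (nat \<Rightarrow> (nat \<Rightarrow> nat \<Rightarrow> real) \<Rightarrow> (nat \<Rightarrow> nat \<Rightarrow> real)) \<Rightarrow> (nat \<Rightarrow> nat)
    \<Rightarrow> sample \<Rightarrow> nat \<Rightarrow> (nat \<times> nat) set" where
  "active M K T hung comm start \<omega> 0 = {..<M} \<times> {..<K}"
| "active M K T hung comm start \<omega> (Suc rho) =
     (let w = mu_tilde M K hung comm start \<omega> rho;
          G = hung w {..<M} {..<K}
      in {(m, k) \<in> active M K T hung comm start \<omega> rho.
            rho = 0 \<or>
            U M G w - U M ((hung (\<lambda>a b. w a b) ({..<M} - {m}) ({..<K} - {k}))(m := k)) w
              \<le> 4 * real M * eps M T rho})"

(* \<tilde>\<mu>^rho exists, i.e. epochs 0..rho-1 were all executed (|C^rho'| > M for rho' < rho) *)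
definition reached where
  "reached M K T hung comm start \<omega> rho \<longleftrightarrow>
     (\<forall>r<rho. card (active M K T hung comm start \<omega> r) > M)"

definition sample_space :: "nat \<Rightarrow> nat \<Rightarrow> nat \<Rightarrow> (nat \<Rightarrow> nat \<Rightarrow> real) \<Rightarrow> sample pmf" where
  "sample_space M K T mu =
     Pi_pmf ({..<T div K} \<times> {..<K} \<times> {..<M} \<times> {..<K} \<times> UNIV) False
            (\<lambda>(rho, j, m, k, b). bernoulli_pmf (mu m k))"

end

theory Submission
  imports Defs
begin

(* Which arm an agent pulls in epoch rho depends on the samples of earlier epochs, so the
   empirical mean of a pair (m, k) is not an average of a fixed number of independent samples.
   Instead, with S the sum and n the number of samples of (m, k) after rho epochs,
   exp (l (S - mu n) - l^2 n / 8) is a supermartingale over epochs: the positions sampled in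
   epoch rho are determined by the earlier epochs, and Hoeffding's lemma bounds the conditional
   expectation of each new factor by 1. Since the covering hints visit every arm once per epoch,
   n >= rho, and Markov's inequality gives |hat mu - mu| <= eps^rho except with probability
   2 exp (-2 rho (eps^rho)^2) = 1 / (M T^2). A union bound over the (T div K) M K triples
   (rho, m, k) leaves probability at most 1 / T; outside it tilde mu is entrywise within
   eps^rho + sqrt (1 / rho) <= 2 eps^rho of mu, so U moves by at most 2 M eps^rho.
   The estimate holds at every epoch up to T div K, reached or not, whatever the Hungarian
   routine does. *)

lemma bernoulli_pmf_mgf_le:
  fixes q l :: real
  assumes q: "0 \<le> q" "q \<le> 1"
  shows "(\<integral>\<^sup>+v. ennreal (exp (l * (of_bool v - q))) \<partial>bernoulli_pmf q) \<le> ennreal (exp (l\<^sup>2 / 8))"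
proof -
  have E: "measure_pmf.expectation (bernoulli_pmf q) of_bool = q"
    using q by (simp add: integral_measure_pmf[where A = UNIV] UNIV_bool)
  have "(\<integral>\<^sup>+v. ennreal (exp (t * (s * of_bool v - s * q))) \<partial>bernoulli_pmf q) \<le> ennreal (exp (t\<^sup>2 / 8))"
    if "t > 0" "\<bar>s\<bar> = 1" for s t :: real
  proof -
    interpret interval_bounded_random_variable "measure_pmf (bernoulli_pmf q)" "\<lambda>v. s * of_bool v"
      "min 0 s" "max 0 s"
      by unfold_locales auto
    show ?thesis
      using Hoeffdings_lemma_nn_integral[OF \<open>t > 0\<close>] that by (auto simp: E abs_if algebra_simps split: if_splits)
  qed
  from this[of l 1] this[of "- l" "- 1"] show ?thesis
    by (cases l "0::real" rule: linorder_cases) (simp_all add: measure_pmf.emeasure_space_1 algebra_simps)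
qed

lemma nn_integral_Pi_pmf_bernoulli_mgf_le:
  fixes S B :: "'a set" and q :: "'a \<Rightarrow> real"
  assumes "finite B" "S \<subseteq> B"
    and P: "\<And>x. x \<in> S \<Longrightarrow> P x = bernoulli_pmf (q x)"
    and q: "\<And>x. x \<in> S \<Longrightarrow> 0 \<le> q x \<and> q x \<le> 1"
  shows "(\<integral>\<^sup>+g. ennreal (exp (\<Sum>x\<in>S. l * (of_bool (g x) - q x) - l\<^sup>2 / 8)) \<partial>Pi_pmf B d P) \<le> 1"
proof -
  define F where "F x v =
    (if x \<in> S then ennreal (exp (l * (of_bool v - q x))) * ennreal (exp (- (l\<^sup>2 / 8))) else 1)" for x v
  have "ennreal (exp (\<Sum>x\<in>S. l * (of_bool (g x) - q x) - l\<^sup>2 / 8)) = (\<Prod>x\<in>B. F x (g x))" for g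
  proof -
    have "ennreal (exp (\<Sum>x\<in>S. l * (of_bool (g x) - q x) - l\<^sup>2 / 8)) = (\<Prod>x\<in>S. F x (g x))"
      using finite_subset[OF assms(2,1)]
      by (simp add: exp_sum F_def prod_ennreal[symmetric] ennreal_mult[symmetric] exp_add[symmetric])
    also have "\<dots> = (\<Prod>x\<in>B. F x (g x))"
      using assms(1,2) by (intro prod.mono_neutral_left) (auto simp: F_def)
    finally show ?thesis .
  qed
  then have "(\<integral>\<^sup>+g. ennreal (exp (\<Sum>x\<in>S. l * (of_bool (g x) - q x) - l\<^sup>2 / 8)) \<partial>Pi_pmf B d P)
      = (\<Prod>x\<in>B. \<integral>\<^sup>+v. F x v \<partial>P x)"
    by (simp add: nn_integral_prod_Pi_pmf[OF assms(1)])
  also have "\<dots> \<le> 1"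
  proof (intro prod_le_1 conjI)
    fix x
    show "(\<integral>\<^sup>+v. F x v \<partial>P x) \<le> 1"
    proof (cases "x \<in> S")
      case True
      then have "(\<integral>\<^sup>+v. F x v \<partial>P x)
          = (\<integral>\<^sup>+v. ennreal (exp (l * (of_bool v - q x))) \<partial>bernoulli_pmf (q x)) * ennreal (exp (- (l\<^sup>2 / 8)))"
        by (simp add: F_def P nn_integral_multc)
      also have "\<dots> \<le> ennreal (exp (l\<^sup>2 / 8)) * ennreal (exp (- (l\<^sup>2 / 8)))"
        using q[OF True] by (intro mult_right_mono bernoulli_pmf_mgf_le) auto
      also have "\<dots> = 1"
        by (simp add: ennreal_mult[symmetric] exp_minus)
      finally show ?thesis .
    qed (simp add: F_def measure_pmf.emeasure_space_1)
  qed simp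
  finally show ?thesis .
qed

lemma nn_integral_Pi_pmf_split:
  assumes "finite I" "B \<subseteq> I"
  shows "(\<integral>\<^sup>+\<omega>. G \<omega> \<partial>Pi_pmf I d P)
         = (\<integral>\<^sup>+f. \<integral>\<^sup>+g. G (\<lambda>x. if x \<in> B then g x else f x) \<partial>Pi_pmf B d P \<partial>Pi_pmf (I - B) d P)"
proof -
  have fin: "finite (I - B)" "finite B"
    using assms finite_subset by auto
  have "Pi_pmf I d P = Pi_pmf ((I - B) \<union> B) d P"
    using assms(2) by (simp add: Un_absorb2)
  also have "\<dots> = map_pmf (\<lambda>(f, g) x. if x \<in> I - B then f x else g x)
                      (pair_pmf (Pi_pmf (I - B) d P) (Pi_pmf B d P))"
    by (rule Pi_pmf_union[OF fin]) auto
  finally have "(\<integral>\<^sup>+\<omega>. G \<omega> \<partial>Pi_pmf I d P)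
      = (\<integral>\<^sup>+f. \<integral>\<^sup>+g. G (\<lambda>x. if x \<in> I - B then f x else g x) \<partial>Pi_pmf B d P \<partial>Pi_pmf (I - B) d P)"
    by (simp add: nn_integral_pair_pmf')
  also have "\<dots> = (\<integral>\<^sup>+f. \<integral>\<^sup>+g. G (\<lambda>x. if x \<in> B then g x else f x) \<partial>Pi_pmf B d P \<partial>Pi_pmf (I - B) d P)"
  proof (intro nn_integral_cong_AE AE_pmfI arg_cong[where f = G] ext)
    fix f g x assume "f \<in> set_pmf (Pi_pmf (I - B) d P)" "g \<in> set_pmf (Pi_pmf B d P)"
    then have "x \<notin> I - B \<Longrightarrow> f x = d" "x \<notin> B \<Longrightarrow> g x = d"
      using set_Pi_pmf_subset[OF fin(1), of d P] set_Pi_pmf_subset[OF fin(2), of d P] by blast+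
    then show "(if x \<in> I - B then f x else g x) = (if x \<in> B then g x else f x)"
      by auto
  qed
  finally show ?thesis .
qed

lemma nn_integral_Pi_pmf_adaptive_bernoulli_mgf_le:
  fixes I B :: "'a set" and F :: "('a \<Rightarrow> bool) \<Rightarrow> ennreal" and S :: "('a \<Rightarrow> bool) \<Rightarrow> 'a set"
  assumes "finite I" "B \<subseteq> I"
    and P: "\<And>x. x \<in> B \<Longrightarrow> P x = bernoulli_pmf (q x)"
    and q: "\<And>x. x \<in> B \<Longrightarrow> 0 \<le> q x \<and> q x \<le> 1"
    and S: "\<And>\<omega>. S \<omega> \<subseteq> B"
    and past: "\<And>\<omega> \<omega>'. (\<And>x. x \<notin> B \<Longrightarrow> \<omega> x = \<omega>' x) \<Longrightarrow> F \<omega> = F \<omega>' \<and> S \<omega> = S \<omega>'"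
  shows "(\<integral>\<^sup>+\<omega>. F \<omega> * ennreal (exp (\<Sum>x\<in>S \<omega>. l * (of_bool (\<omega> x) - q x) - l\<^sup>2 / 8)) \<partial>Pi_pmf I d P)
         \<le> (\<integral>\<^sup>+\<omega>. F \<omega> \<partial>Pi_pmf I d P)"
proof -
  define E where "E f g = ennreal (exp (\<Sum>x\<in>S f. l * (of_bool (g x) - q x) - l\<^sup>2 / 8))"
    for f g :: "'a \<Rightarrow> bool"
  have merge_past:
      "F (\<lambda>x. if x \<in> B then g x else f x) = F f" "S (\<lambda>x. if x \<in> B then g x else f x) = S f"
    for f g using past[of "\<lambda>x. if x \<in> B then g x else f x" f] by simp_all
  have "(\<integral>\<^sup>+\<omega>. F \<omega> * ennreal (exp (\<Sum>x\<in>S \<omega>. l * (of_bool (\<omega> x) - q x) - l\<^sup>2 / 8)) \<partial>Pi_pmf I d P)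
      = (\<integral>\<^sup>+f. \<integral>\<^sup>+g. F f * E f g \<partial>Pi_pmf B d P \<partial>Pi_pmf (I - B) d P)"
    unfolding nn_integral_Pi_pmf_split[OF assms(1,2)] E_def merge_past
    using S by (intro nn_integral_cong arg_cong[where f = "\<lambda>t. _ * ennreal (exp t)"] sum.cong) auto
  also have "\<dots> = (\<integral>\<^sup>+f. F f * (\<integral>\<^sup>+g. E f g \<partial>Pi_pmf B d P) \<partial>Pi_pmf (I - B) d P)"
    by (simp add: nn_integral_cmult)
  also have "\<dots> \<le> (\<integral>\<^sup>+f. F f * 1 \<partial>Pi_pmf (I - B) d P)"
    unfolding E_def using S P q finite_subset[OF assms(2,1)]
    by (intro nn_integral_mono mult_left_mono nn_integral_Pi_pmf_bernoulli_mgf_le) auto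
  also have "\<dots> = (\<integral>\<^sup>+\<omega>. F \<omega> \<partial>Pi_pmf I d P)"
    unfolding nn_integral_Pi_pmf_split[OF assms(1,2)] merge_past
    by (simp add: measure_pmf.emeasure_space_1)
  finally show ?thesis .
qed

definition observed ::
  "nat \<Rightarrow> nat \<Rightarrow> ((nat \<Rightarrow> nat \<Rightarrow> real) \<Rightarrow> nat set \<Rightarrow> nat set \<Rightarrow> (nat \<Rightarrow> nat))
    \<Rightarrow> (nat \<Rightarrow> (nat \<Rightarrow> nat \<Rightarrow> real) \<Rightarrow> (nat \<Rightarrow> nat \<Rightarrow> real)) \<Rightarrow> (nat \<Rightarrow> nat)
    \<Rightarrow> sample \<Rightarrow> nat \<Rightarrow> nat \<Rightarrow> nat \<Rightarrow> (nat \<times> nat \<times> nat \<times> nat \<times> bool) set" where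
  "observed M K hung comm start \<omega> rho m k =
     (let G = hung (mu_tilde M K hung comm start \<omega> rho) {..<M} {..<K}
      in (\<lambda>j. (rho, j, m, k, False)) ` {j. j < K \<and> (\<forall>m'<M. m' \<noteq> m \<longrightarrow> G m' \<noteq> G m) \<and> G m = k}
         \<union> (\<lambda>j. (rho, j, m, k, True)) ` {j. j < K \<and> covering K ((start rho + j) mod K + 1) m = k})"

lemma sum_Un_tagged:
  assumes "finite J1" "finite J2"
  shows "(\<Sum>x\<in>(\<lambda>j. (r, j, m, k, False)) ` J1 \<union> (\<lambda>j. (r, j, m, k, True)) ` J2. f x)
         = (\<Sum>j\<in>J1. f (r, j, m, k, False)) + (\<Sum>j\<in>J2. f (r, j, m, k, True))"
  using assms by (subst sum.union_disjoint) (auto simp: sum.reindex inj_on_def)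

lemma run_Suc_snd:
  "snd (run M K hung comm start \<omega> (Suc rho)) m k
     = snd (run M K hung comm start \<omega> rho) m k + card (observed M K hung comm start \<omega> rho m k)"
  unfolding card_eq_sum observed_def Let_def
  by (subst sum_Un_tagged) (simp_all add: mu_tilde_def epoch_update_def Let_def)

lemma run_Suc_fst:
  "fst (run M K hung comm start \<omega> (Suc rho)) m k
     = fst (run M K hung comm start \<omega> rho) m k
       + (\<Sum>x\<in>observed M K hung comm start \<omega> rho m k. of_bool (\<omega> x))"
  unfolding observed_def Let_def
  by (subst sum_Un_tagged) (simp_all add: mu_tilde_def epoch_update_def Let_def Int_def conj_ac)

lemma run_cong_past:
  "(\<And>x. fst x < rho \<Longrightarrow> \<omega> x = \<omega>' x) \<Longrightarrow>
     run M K hung comm start \<omega> rho = run M K hung comm start \<omega>' rho"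
proof (induction rho)
  case (Suc rho)
  then have "run M K hung comm start \<omega> rho = run M K hung comm start \<omega>' rho"
    and "\<omega> (rho, x) = \<omega>' (rho, x)" for x
    by auto
  then show ?case by (simp add: Let_def epoch_update_def)
qed simp

lemma observed_cong_past:
  "(\<And>x. fst x < rho \<Longrightarrow> \<omega> x = \<omega>' x) \<Longrightarrow>
     observed M K hung comm start \<omega> rho m k = observed M K hung comm start \<omega>' rho m k"
  unfolding observed_def mu_tilde_def by (simp add: run_cong_past[of rho \<omega> \<omega>'])

lemma observed_subset:
  "observed M K hung comm start \<omega> rho m k \<subseteq> {rho} \<times> {..<K} \<times> {m} \<times> {k} \<times> UNIV"
  unfolding observed_def Let_def by auto

lemma covering_hits_every_arm:
  assumes "k < K"
  shows "\<exists>j<K. covering K ((s + j) mod K + 1) m = k"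
proof
  define a where "a = (m + s) mod K"
  define j where "j = (K - a + k) mod K"
  have "a < K" using assms by (simp add: a_def)
  have "covering K ((s + j) mod K + 1) m = (a + j) mod K"
    by (simp add: covering_def a_def mod_add_right_eq mod_add_left_eq add.assoc)
  also have "\<dots> = (a + (K - a + k)) mod K"
    by (simp add: j_def mod_add_right_eq)
  also have "a + (K - a + k) = K + k"
    using \<open>a < K\<close> by simp
  finally show "j < K \<and> covering K ((s + j) mod K + 1) m = k"
    using assms by (simp add: j_def)
qed

lemma le_snd_run:
  assumes "k < K"
  shows "rho \<le> snd (run M K hung comm start \<omega> rho) m k"
proof (induction rho)
  case (Suc rho)
  obtain j where "j < K" "covering K ((start rho + j) mod K + 1) m = k"
    using covering_hits_every_arm[OF assms] by blast
  then have "(rho, j, m, k, True) \<in> observed M K hung comm start \<omega> rho m k"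
    by (auto simp: observed_def Let_def)
  then have "card (observed M K hung comm start \<omega> rho m k) \<noteq> 0"
    using finite_subset[OF observed_subset] by auto
  with Suc show ?case unfolding run_Suc_snd by linarith
qed simp

lemma fst_run_bounds:
  "0 \<le> fst (run M K hung comm start \<omega> rho) m k \<and>
   fst (run M K hung comm start \<omega> rho) m k \<le> snd (run M K hung comm start \<omega> rho) m k"
proof (induction rho)
  case (Suc rho)
  have "(\<Sum>x\<in>observed M K hung comm start \<omega> rho m k. of_bool (\<omega> x) :: real)
        \<le> card (observed M K hung comm start \<omega> rho m k)"
    using sum_mono[of "observed M K hung comm start \<omega> rho m k" "\<lambda>x. of_bool (\<omega> x) :: real" "\<lambda>_. 1"]
    by (simp del: sum_of_bool_eq)
  with Suc show ?case
    unfolding run_Suc_fst run_Suc_snd by (simp add: sum_nonneg del: sum_of_bool_eq)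
qed simp

lemma emp_mean_run_bounds:
  "0 \<le> emp_mean (run M K hung comm start \<omega> rho) m k \<and>
   emp_mean (run M K hung comm start \<omega> rho) m k \<le> 1"
  using fst_run_bounds[of M K hung comm start \<omega> rho m k] unfolding emp_mean_def
  by (cases "snd (run M K hung comm start \<omega> rho) m k = 0") (simp_all add: divide_le_eq_1)

definition hoeffding_process ::
  "nat \<Rightarrow> nat \<Rightarrow> ((nat \<Rightarrow> nat \<Rightarrow> real) \<Rightarrow> nat set \<Rightarrow> nat set \<Rightarrow> (nat \<Rightarrow> nat))
    \<Rightarrow> (nat \<Rightarrow> (nat \<Rightarrow> nat \<Rightarrow> real) \<Rightarrow> (nat \<Rightarrow> nat \<Rightarrow> real)) \<Rightarrow> (nat \<Rightarrow> nat)
    \<Rightarrow> (nat \<Rightarrow> nat \<Rightarrow> real) \<Rightarrow> nat \<Rightarrow> nat \<Rightarrow> real \<Rightarrow> nat \<Rightarrow> sample \<Rightarrow> real" where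
  "hoeffding_process M K hung comm start mu m k l rho \<omega> =
     exp (l * (fst (run M K hung comm start \<omega> rho) m k
               - mu m k * snd (run M K hung comm start \<omega> rho) m k)
          - l\<^sup>2 * snd (run M K hung comm start \<omega> rho) m k / 8)"

lemma hoeffding_process_Suc:
  "hoeffding_process M K hung comm start mu m k l (Suc rho) \<omega>
     = hoeffding_process M K hung comm start mu m k l rho \<omega>
       * exp (\<Sum>x\<in>observed M K hung comm start \<omega> rho m k. l * (of_bool (\<omega> x) - mu m k) - l\<^sup>2 / 8)"
  unfolding hoeffding_process_def run_Suc_fst run_Suc_snd exp_add[symmetric]
  by (simp add: sum_subtractf sum_distrib_left algebra_simps add_divide_distrib del: sum_of_bool_eq)

lemma nn_integral_hoeffding_process_le_1:
  assumes mu: "\<forall>m<M. \<forall>k<K. 0 \<le> mu m k \<and> mu m k \<le> 1" and "m < M" "k < K" "rho \<le> T div K"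
  shows "(\<integral>\<^sup>+\<omega>. hoeffding_process M K hung comm start mu m k l rho \<omega> \<partial>sample_space M K T mu) \<le> 1"
  using \<open>rho \<le> T div K\<close>
proof (induction rho)
  case 0
  then show ?case by (simp add: hoeffding_process_def measure_pmf.emeasure_space_1)
next
  case (Suc r)
  define I :: "(nat \<times> nat \<times> nat \<times> nat \<times> bool) set"
    where "I = {..<T div K} \<times> {..<K} \<times> {..<M} \<times> {..<K} \<times> UNIV"
  define B :: "(nat \<times> nat \<times> nat \<times> nat \<times> bool) set"
    where "B = {r} \<times> {..<K} \<times> {m} \<times> {k} \<times> UNIV"
  define P :: "nat \<times> nat \<times> nat \<times> nat \<times> bool \<Rightarrow> bool pmf"
    where "P = (\<lambda>(rho, j, m, k, b). bernoulli_pmf (mu m k))"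
  have past: "(\<And>x. x \<notin> B \<Longrightarrow> \<omega> x = \<omega>' x) \<Longrightarrow>
      ennreal (hoeffding_process M K hung comm start mu m k l r \<omega>)
        = ennreal (hoeffding_process M K hung comm start mu m k l r \<omega>')
      \<and> observed M K hung comm start \<omega> r m k = observed M K hung comm start \<omega>' r m k" for \<omega> \<omega>'
    using run_cong_past[of r \<omega> \<omega>'] observed_cong_past[of r \<omega> \<omega>']
    by (auto simp: B_def hoeffding_process_def)
  have "(\<integral>\<^sup>+\<omega>. hoeffding_process M K hung comm start mu m k l (Suc r) \<omega> \<partial>Pi_pmf I False P)
      = (\<integral>\<^sup>+\<omega>. ennreal (hoeffding_process M K hung comm start mu m k l r \<omega>)
           * ennreal (exp (\<Sum>x\<in>observed M K hung comm start \<omega> r m k.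
                             l * (of_bool (\<omega> x) - mu m k) - l\<^sup>2 / 8))
         \<partial>Pi_pmf I False P)"
    unfolding hoeffding_process_Suc by (simp add: ennreal_mult hoeffding_process_def del: run.simps)
  also have "\<dots> \<le> (\<integral>\<^sup>+\<omega>. hoeffding_process M K hung comm start mu m k l r \<omega> \<partial>Pi_pmf I False P)"
  proof (rule nn_integral_Pi_pmf_adaptive_bernoulli_mgf_le[where B = B and q = "\<lambda>_. mu m k"])
    show "finite I" by (simp add: I_def)
    show "B \<subseteq> I" using Suc.prems \<open>m < M\<close> \<open>k < K\<close> by (auto simp: I_def B_def)
    show "P x = bernoulli_pmf (mu m k)" if "x \<in> B" for x using that by (auto simp: B_def P_def)
    show "0 \<le> mu m k \<and> mu m k \<le> 1" using mu \<open>m < M\<close> \<open>k < K\<close> by simp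
    show "observed M K hung comm start \<omega> r m k \<subseteq> B" for \<omega> unfolding B_def by (rule observed_subset)
  qed (fact past)
  also have "\<dots> \<le> 1"
    using Suc by (simp add: sample_space_def I_def P_def)
  finally show ?case
    by (simp add: sample_space_def I_def P_def)
qed

(* l = 4 e is the Chernoff choice: it maximises l e - l\<^sup>2 / 8. *)
lemma hoeffding_process_ge_of_deviation:
  assumes "k < K" "1 \<le> rho" "0 \<le> e" "\<bar>s\<bar> = 1"
    and dev: "e < s * (emp_mean (run M K hung comm start \<omega> rho) m k - mu m k)"
  shows "exp (2 * e\<^sup>2 * rho) \<le> hoeffding_process M K hung comm start mu m k (4 * s * e) rho \<omega>"
proof -
  define S where "S = fst (run M K hung comm start \<omega> rho) m k"
  define n where "n = real (snd (run M K hung comm start \<omega> rho) m k)"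
  define A where "A = s * (S - mu m k * n)"
  have "rho \<le> n" unfolding n_def using le_snd_run[OF \<open>k < K\<close>] by simp
  with \<open>1 \<le> rho\<close> have "0 < n" by simp
  have "e * n < s * (S / n - mu m k) * n"
    using mult_strict_right_mono[OF dev \<open>0 < n\<close>] by (simp add: emp_mean_def S_def n_def)
  also have "\<dots> = A"
    using \<open>0 < n\<close> by (simp add: A_def field_simps)
  finally have "4 * e * (e * n) \<le> 4 * e * A"
    using \<open>0 \<le> e\<close> by (intro mult_left_mono) auto
  moreover have "s * s = 1"
    using \<open>\<bar>s\<bar> = 1\<close> abs_mult_self_eq[of s] by simp
  then have "(4 * s * e)\<^sup>2 * n / 8 = 2 * e\<^sup>2 * n" "4 * e * (e * n) = 4 * e\<^sup>2 * n"
    by (simp_all add: power2_eq_square algebra_simps)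
  moreover have "2 * e\<^sup>2 * rho \<le> 2 * e\<^sup>2 * n"
    using \<open>rho \<le> n\<close> by (intro mult_left_mono) auto
  moreover have "4 * s * e * (S - mu m k * n) = 4 * e * A"
    by (simp add: A_def)
  ultimately have "2 * e\<^sup>2 * rho \<le> 4 * s * e * (S - mu m k * n) - (4 * s * e)\<^sup>2 * n / 8"
    by linarith
  then show ?thesis
    by (simp add: hoeffding_process_def S_def n_def)
qed

lemma prob_emp_mean_deviation_le:
  assumes mu: "\<forall>m<M. \<forall>k<K. 0 \<le> mu m k \<and> mu m k \<le> 1" and "m < M" "k < K"
    and "1 \<le> rho" "rho \<le> T div K" "0 \<le> e" "\<bar>s\<bar> = 1"
  shows "measure_pmf.prob (sample_space M K T mu)
           {\<omega>. e < s * (emp_mean (run M K hung comm start \<omega> rho) m k - mu m k)}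
         \<le> exp (- (2 * e\<^sup>2 * rho))"
proof -
  define X where "X = {\<omega>. e < s * (emp_mean (run M K hung comm start \<omega> rho) m k - mu m k)}"
  define c where "c = exp (2 * e\<^sup>2 * rho)"
  have "ennreal c * emeasure (sample_space M K T mu) X
      = (\<integral>\<^sup>+\<omega>. ennreal c * indicator X \<omega> \<partial>sample_space M K T mu)"
    by (simp add: nn_integral_cmult_indicator)
  also have "\<dots>
      \<le> (\<integral>\<^sup>+\<omega>. hoeffding_process M K hung comm start mu m k (4 * s * e) rho \<omega> \<partial>sample_space M K T mu)"
    using hoeffding_process_ge_of_deviation[of k K rho e s] assms
    by (intro nn_integral_mono) (auto simp: X_def c_def indicator_def intro: ennreal_leI)
  also have "\<dots> \<le> 1"
    using assms by (intro nn_integral_hoeffding_process_le_1)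
  finally have "c * measure_pmf.prob (sample_space M K T mu) X \<le> 1"
    by (simp add: measure_pmf.emeasure_eq_measure c_def ennreal_mult[symmetric] ennreal_le_1)
  then show ?thesis
    by (simp add: X_def c_def exp_minus field_simps)
qed

lemma prob_abs_emp_mean_deviation_le:
  assumes "\<forall>m<M. \<forall>k<K. 0 \<le> mu m k \<and> mu m k \<le> 1" "m < M" "k < K" "1 \<le> rho" "rho \<le> T div K" "0 \<le> e"
  shows "measure_pmf.prob (sample_space M K T mu)
           {\<omega>. e < \<bar>emp_mean (run M K hung comm start \<omega> rho) m k - mu m k\<bar>} \<le> 2 * exp (- (2 * e\<^sup>2 * rho))"
proof -
  let ?P = "measure_pmf.prob (sample_space M K T mu)"
  let ?dev = "\<lambda>s. {\<omega>. e < s * (emp_mean (run M K hung comm start \<omega> rho) m k - mu m k)}"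
  have "{\<omega>. e < \<bar>emp_mean (run M K hung comm start \<omega> rho) m k - mu m k\<bar>} = ?dev 1 \<union> ?dev (- 1)"
    by (auto simp: abs_real_def)
  then have "?P {\<omega>. e < \<bar>emp_mean (run M K hung comm start \<omega> rho) m k - mu m k\<bar>} \<le> ?P (?dev 1) + ?P (?dev (- 1))"
    by (simp add: measure_subadditive)
  also have "\<dots> \<le> 2 * exp (- (2 * e\<^sup>2 * rho))"
    using prob_emp_mean_deviation_le[OF assms, where s = 1 and hung = hung and comm = comm and start = start]
      prob_emp_mean_deviation_le[OF assms, where s = "- 1" and hung = hung and comm = comm and start = start]
    by simp
  finally show ?thesis .
qed

lemma ln_two_div_eta:
  assumes "1 \<le> M" "1 \<le> T"
  shows "ln (2 / eta M T) = ln (2 * real M * (real T)\<^sup>2) / 2"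
proof -
  have "0 < eta M T" "(2 / eta M T)\<^sup>2 = 2 * real M * (real T)\<^sup>2"
    using assms by (simp_all add: eta_def power_divide)
  then show ?thesis
    using ln_realpow[of "2 / eta M T" 2] by simp
qed

lemma exp_neg_two_ln_two_div_eta:
  assumes "1 \<le> M" "1 \<le> T"
  shows "exp (- (2 * ln (2 / eta M T))) = 1 / (2 * real M * (real T)\<^sup>2)"
  using assms by (simp add: ln_two_div_eta exp_minus inverse_eq_divide)

lemma one_le_ln_two_div_eta:
  assumes "1 \<le> M" "2 \<le> T"
  shows "1 \<le> ln (2 / eta M T)"
proof -
  have "exp (2 :: real) = (exp 1)\<^sup>2"
    by (simp add: exp_double[symmetric])
  also have "\<dots> \<le> (272 / 100)\<^sup>2"
    using e_less_272 by (intro power_mono) auto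
  also have "\<dots> \<le> 2 * real M * (real T)\<^sup>2"
    using assms mult_mono[of 1 "real M" 4 "(real T)\<^sup>2"] power_mono[of 2 "real T" 2]
    by (simp add: power2_eq_square)
  finally have "2 \<le> ln (2 * real M * (real T)\<^sup>2)"
    by (subst ln_ge_iff) (use assms in simp_all)
  then show ?thesis
    using assms by (simp add: ln_two_div_eta)
qed

lemma ln_two_div_eta_nonneg:
  assumes "1 \<le> M" "1 \<le> T"
  shows "0 \<le> ln (2 / eta M T)"
proof -
  have "1 \<le> 2 * real M * (real T)\<^sup>2"
    using assms mult_mono[of 1 "2 * real M" 1 "(real T)\<^sup>2"] by (simp add: one_le_power)
  then show ?thesis
    using assms by (simp add: ln_two_div_eta)
qed

lemma eps_squared:
  assumes "1 \<le> M" "1 \<le> T"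
  shows "(eps M T rho)\<^sup>2 = ln (2 / eta M T) / rho"
  using ln_two_div_eta_nonneg[OF assms] by (simp add: eps_def)

lemma prob_emp_mean_far_le:
  assumes "\<forall>m<M. \<forall>k<K. 0 \<le> mu m k \<and> mu m k \<le> 1" "m < M" "k < K" "1 \<le> rho" "rho \<le> T div K"
    and "1 \<le> M" "1 \<le> T"
  shows "measure_pmf.prob (sample_space M K T mu)
           {\<omega>. eps M T rho < \<bar>emp_mean (run M K hung comm start \<omega> rho) m k - mu m k\<bar>}
         \<le> 1 / (real M * (real T)\<^sup>2)"
proof -
  have "0 \<le> eps M T rho"
    using ln_two_div_eta_nonneg assms by (simp add: eps_def)
  moreover have "exp (- (2 * (eps M T rho)\<^sup>2 * rho)) = 1 / (2 * real M * (real T)\<^sup>2)"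
    using assms by (simp add: eps_squared exp_neg_two_ln_two_div_eta)
  ultimately show ?thesis
    using prob_abs_emp_mean_deviation_le[OF assms(1-5), of "eps M T rho" hung comm start] by simp
qed

lemma prob_some_emp_mean_far_le:
  assumes "\<forall>m<M. \<forall>k<K. 0 \<le> mu m k \<and> mu m k \<le> 1" "1 \<le> M" "1 \<le> T"
  shows "measure_pmf.prob (sample_space M K T mu)
           (\<Union>(rho, m, k)\<in>{1..T div K} \<times> {..<M} \<times> {..<K}.
              {\<omega>. eps M T rho < \<bar>emp_mean (run M K hung comm start \<omega> rho) m k - mu m k\<bar>})
         \<le> 1 / real T"
proof -
  let ?J = "{1..T div K} \<times> {..<M} \<times> {..<K}"
  let ?far = "\<lambda>(rho, m, k). {\<omega>. eps M T rho < \<bar>emp_mean (run M K hung comm start \<omega> rho) m k - mu m k\<bar>}"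
  have "measure_pmf.prob (sample_space M K T mu) (\<Union>x\<in>?J. ?far x)
        \<le> (\<Sum>x\<in>?J. measure_pmf.prob (sample_space M K T mu) (?far x))"
    by (rule measure_pmf.finite_measure_subadditive_finite) auto
  also have "\<dots> \<le> (\<Sum>x\<in>?J. 1 / (real M * (real T)\<^sup>2))"
    using prob_emp_mean_far_le[OF assms(1)] assms(2,3) by (intro sum_mono) auto
  also have "\<dots> = real (T div K * K) / (real T)\<^sup>2"
    using assms(2) by (simp add: card_cartesian_product)
  also have "\<dots> \<le> real T / (real T)\<^sup>2"
    by (intro divide_right_mono) (simp_all del: of_nat_mult)
  also have "\<dots> = 1 / real T"
    by (simp add: power2_eq_square)
  finally show ?thesis .
qed

lemma abs_U_diff_le:
  assumes "\<forall>m<M. \<bar>w m (g m) - v m (g m)\<bar> \<le> d"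
  shows "\<bar>U M g w - U M g v\<bar> \<le> real M * d"
proof -
  have "\<bar>U M g w - U M g v\<bar>
      = \<bar>\<Sum>m<M. if \<forall>m'<M. m' \<noteq> m \<longrightarrow> g m' \<noteq> g m then w m (g m) - v m (g m) else 0\<bar>"
    unfolding U_def sum_subtractf[symmetric] by (intro arg_cong[where f = abs] sum.cong) auto
  also have "\<dots> \<le> (\<Sum>m<M. d)"
    using assms by (intro order_trans[OF sum_abs] sum_mono) auto
  finally show ?thesis by simp
qed

lemma abs_mu_tilde_diff_le:
  assumes "is_comm M K comm" "m < M" "k < K" "1 \<le> rho" "sqrt (1 / rho) \<le> e"
    and "\<bar>emp_mean (run M K hung comm start \<omega> rho) m k - mu m k\<bar> \<le> e"
  shows "\<bar>mu_tilde M K hung comm start \<omega> rho m k - mu m k\<bar> \<le> 2 * e"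
proof -
  let ?h = "emp_mean (run M K hung comm start \<omega> rho)"
  have "?h m k \<le> comm rho ?h m k" "comm rho ?h m k \<le> ?h m k + sqrt (1 / rho)"
    using assms(1-4) emp_mean_run_bounds unfolding is_comm_def by blast+
  moreover have "mu_tilde M K hung comm start \<omega> rho = comm rho ?h"
    using assms(4) by (simp add: mu_tilde_def tilde_of_def)
  ultimately show ?thesis
    using assms(5,6) unfolding abs_diff_le_iff by auto
qed

lemma sqrt_inverse_le_eps:
  assumes "1 \<le> M" "2 \<le> T"
  shows "sqrt (1 / rho) \<le> eps M T rho"
  unfolding eps_def using one_le_ln_two_div_eta[OF assms]
  by (intro real_sqrt_le_mono divide_right_mono) auto

lemma abs_U_mu_tilde_diff_le:
  assumes "is_comm M K comm" "1 \<le> M" "2 \<le> T" "1 \<le> rho" "g \<in> matchings M K"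
    and close: "\<forall>m<M. \<forall>k<K. \<bar>emp_mean (run M K hung comm start \<omega> rho) m k - mu m k\<bar> \<le> eps M T rho"
  shows "\<bar>U M g (mu_tilde M K hung comm start \<omega> rho) - U M g mu\<bar> \<le> 2 * real M * eps M T rho"
proof -
  have "\<bar>mu_tilde M K hung comm start \<omega> rho m (g m) - mu m (g m)\<bar> \<le> 2 * eps M T rho" if "m < M" for m
  proof -
    have "g m < K"
      using assms(5) that by (simp add: matchings_def)
    with that close show ?thesis
      by (intro abs_mu_tilde_diff_le[OF assms(1)] assms(4) sqrt_inverse_le_eps[OF assms(2,3)]) auto
  qed
  then show ?thesis
    using abs_U_diff_le[of M "mu_tilde M K hung comm start \<omega> rho" g mu "2 * eps M T rho"] by simp
qed

theorem lemma14:
  fixes M K T :: nat and mu :: "nat \<Rightarrow> nat \<Rightarrow> real"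
    and hung :: "(nat \<Rightarrow> nat \<Rightarrow> real) \<Rightarrow> nat set \<Rightarrow> nat set \<Rightarrow> (nat \<Rightarrow> nat)"
    and comm :: "nat \<Rightarrow> (nat \<Rightarrow> nat \<Rightarrow> real) \<Rightarrow> (nat \<Rightarrow> nat \<Rightarrow> real)"
    and start :: "nat \<Rightarrow> nat"
  assumes "1 \<le> M" and "M < K" and "1 \<le> T"
    and "\<forall>m<M. \<forall>k<K. 0 \<le> mu m k \<and> mu m k \<le> 1"
    and "\<exists>g\<in>matchings M K. \<forall>g'\<in>matchings M K. U M g' mu \<le> U M g mu \<and>
            (U M g' mu = U M g mu \<longrightarrow> (\<forall>m<M. g' m = g m))"
    and "is_hungarian hung"
    and "is_comm M K comm"
  shows "measure_pmf.prob (sample_space M K T mu)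
           {\<omega>. \<forall>rho. 1 \<le> rho \<and> rho \<le> T div K \<and> reached M K T hung comm start \<omega> rho \<longrightarrow>
                 (\<forall>g\<in>matchings M K.
                    \<bar>U M g (mu_tilde M K hung comm start \<omega> rho) - U M g mu\<bar> \<le> 2 * real M * eps M T rho)}
         \<ge> 1 - 1 / real T"
proof -
  let ?\<Omega> = "sample_space M K T mu"
  let ?far = "\<Union>(rho, m, k)\<in>{1..T div K} \<times> {..<M} \<times> {..<K}.
                {\<omega>. eps M T rho < \<bar>emp_mean (run M K hung comm start \<omega> rho) m k - mu m k\<bar>}"
  let ?good = "{\<omega>. \<forall>rho. 1 \<le> rho \<and> rho \<le> T div K \<and> reached M K T hung comm start \<omega> rho \<longrightarrow>
                 (\<forall>g\<in>matchings M K.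
                    \<bar>U M g (mu_tilde M K hung comm start \<omega> rho) - U M g mu\<bar> \<le> 2 * real M * eps M T rho)}"
  have "UNIV - ?far \<subseteq> ?good"
  proof (intro subsetI CollectI allI impI ballI)
    fix \<omega> rho g
    assume \<omega>: "\<omega> \<in> UNIV - ?far" and rho: "1 \<le> rho \<and> rho \<le> T div K \<and> reached M K T hung comm start \<omega> rho"
      and "g \<in> matchings M K"
    have "2 \<le> T"
      using rho assms(1,2) div_le_dividend[of T K] div_less[of T K] by linarith
    moreover have "\<forall>m<M. \<forall>k<K. \<bar>emp_mean (run M K hung comm start \<omega> rho) m k - mu m k\<bar> \<le> eps M T rho"
      using \<omega> rho by (auto simp: not_less)
    ultimately show "\<bar>U M g (mu_tilde M K hung comm start \<omega> rho) - U M g mu\<bar> \<le> 2 * real M * eps M T rho"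
      using assms(1,7) rho \<open>g \<in> matchings M K\<close> by (intro abs_U_mu_tilde_diff_le) auto
  qed
  then have "1 - measure_pmf.prob ?\<Omega> ?far \<le> measure_pmf.prob ?\<Omega> ?good"
    using measure_pmf.finite_measure_mono[of "UNIV - ?far" ?good ?\<Omega>]
    by (simp add: measure_pmf.prob_compl[symmetric])
  with prob_some_emp_mean_far_le[OF assms(4,1,3), of hung comm start] show ?thesis
    by linarith
qed

end
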